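(* Let $D$ be a strongly connected digraph with $m\ge 3$ arcs. Then $rc^*(D)=src^*(D)=m$ if and only if $D$ is the directed cycle $\overrightarrow{C_m}$ of length $m$.
   Context: Digraphs are finite without loops or multiple arcs. For a strongly connected digraph $D$ and an arc-colouring $\Gamma:A(D)\to\{1,\dots,k\}$, a directed path is rainbow if its arcs have pairwise distinct colours. $\Gamma$ is rainbow connected if for every ordered pair of distinct vertices $x,y$ there is a rainbow directed $xy$-path; $rc^*(D)$ is the minimum $k$ admitting such a colouring. $\Gamma$ is strongly rainbow connected if for every ordered pair of distinct vertices $x,y$ there is a rainbow directed $xy$-path of length $d_D(x,y)$; $src^*(D)$ is the minimum such $k$. *)

theory Defs
  imports Main
begin

text \<open>A digraph is given by a vertex set V and an arc set A of ordered pairs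
  (finite, no loops; multiple arcs are impossible by construction).\<close>
definition digraph :: "'a set \<Rightarrow> ('a \<times> 'a) set \<Rightarrow> bool" where
  "digraph V A \<longleftrightarrow> finite V \<and> A \<subseteq> V \<times> V \<and> (\<forall>x. (x, x) \<notin> A)"

definition strongly_connected :: "'a set \<Rightarrow> ('a \<times> 'a) set \<Rightarrow> bool" where
  "strongly_connected V A \<longleftrightarrow> digraph V A \<and> V \<noteq> {} \<and>
     (\<forall>x\<in>V. \<forall>y\<in>V. (x, y) \<in> A\<^sup>*)"

definition path_arcs :: "'a list \<Rightarrow> ('a \<times> 'a) list" where
  "path_arcs p = zip p (tl p)"

definition dipath :: "('a \<times> 'a) set \<Rightarrow> 'a list \<Rightarrow> bool" where
  "dipath A p \<longleftrightarrow> p \<noteq> [] \<and> distinct p \<and> set (path_arcs p) \<subseteq> A"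

definition path_from_to :: "('a \<times> 'a) set \<Rightarrow> 'a list \<Rightarrow> 'a \<Rightarrow> 'a \<Rightarrow> bool" where
  "path_from_to A p x y \<longleftrightarrow> dipath A p \<and> hd p = x \<and> last p = y"

definition path_len :: "'a list \<Rightarrow> nat" where
  "path_len p = length p - 1"

definition dist :: "('a \<times> 'a) set \<Rightarrow> 'a \<Rightarrow> 'a \<Rightarrow> nat" where
  "dist A x y = (LEAST n. \<exists>p. path_from_to A p x y \<and> path_len p = n)"

definition rainbow :: "('a \<times> 'a \<Rightarrow> nat) \<Rightarrow> 'a list \<Rightarrow> bool" where
  "rainbow \<Gamma> p \<longleftrightarrow> distinct (map \<Gamma> (path_arcs p))"

definition arc_colouring :: "('a \<times> 'a) set \<Rightarrow> nat \<Rightarrow> ('a \<times> 'a \<Rightarrow> nat) \<Rightarrow> bool" where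
  "arc_colouring A k \<Gamma> \<longleftrightarrow> (\<forall>e\<in>A. \<Gamma> e \<in> {1..k})"

definition rainbow_connected :: "'a set \<Rightarrow> ('a \<times> 'a) set \<Rightarrow> ('a \<times> 'a \<Rightarrow> nat) \<Rightarrow> bool" where
  "rainbow_connected V A \<Gamma> \<longleftrightarrow>
     (\<forall>x\<in>V. \<forall>y\<in>V. x \<noteq> y \<longrightarrow> (\<exists>p. path_from_to A p x y \<and> rainbow \<Gamma> p))"

definition strongly_rainbow_connected :: "'a set \<Rightarrow> ('a \<times> 'a) set \<Rightarrow> ('a \<times> 'a \<Rightarrow> nat) \<Rightarrow> bool" where
  "strongly_rainbow_connected V A \<Gamma> \<longleftrightarrow>
     (\<forall>x\<in>V. \<forall>y\<in>V. x \<noteq> y \<longrightarrow>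
        (\<exists>p. path_from_to A p x y \<and> path_len p = dist A x y \<and> rainbow \<Gamma> p))"

definition rc :: "'a set \<Rightarrow> ('a \<times> 'a) set \<Rightarrow> nat" where
  "rc V A = (LEAST k. \<exists>\<Gamma>. arc_colouring A k \<Gamma> \<and> rainbow_connected V A \<Gamma>)"

definition src :: "'a set \<Rightarrow> ('a \<times> 'a) set \<Rightarrow> nat" where
  "src V A = (LEAST k. \<exists>\<Gamma>. arc_colouring A k \<Gamma> \<and> strongly_rainbow_connected V A \<Gamma>)"

definition is_directed_cycle :: "'a set \<Rightarrow> ('a \<times> 'a) set \<Rightarrow> nat \<Rightarrow> bool" where
  "is_directed_cycle V A m \<longleftrightarrow>
     (\<exists>f. bij_betw f {..<m} V \<and> A = {(f i, f (Suc i mod m)) | i. i < m})"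

end

theory Submission
  imports Defs "HOL-Combinatorics.Orbits"
begin

text \<open>
  Colour the arcs so that arcs with different tails get different colours. A directed path leaves
  each of its vertices at most once, so under such a colouring every path, in particular every
  shortest path, is rainbow. Injective colourings are of this kind, hence \<open>rc\<close> and \<open>src\<close> are
  at most \<open>m\<close>; if some vertex has two out-arcs, giving both the same colour shows \<open>rc \<le> m - 1\<close>.
  So \<open>rc = m\<close> forces every vertex to have a unique successor \<open>s\<close>, and strong connectivity makes
  \<open>V\<close> a single orbit of \<open>s\<close>: the digraph is the directed cycle. Conversely, on the directed cycle
  the only path from the head of an arc \<open>e\<close> back to its tail uses every arc except \<open>e\<close>, so a
  rainbow connected colouring is injective on \<open>A - {e}\<close>; as \<open>m \<ge> 3\<close>, any two arcs miss some
  third arc \<open>e\<close>, so the colouring is injective and uses \<open>m\<close> colours.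
\<close>

lemma path_arcs_Cons: "p \<noteq> [] \<Longrightarrow> path_arcs (x # p) = (x, hd p) # path_arcs p"
  by (cases p) (auto simp: path_arcs_def)

lemma path_arcs_drop: "path_arcs (drop i p) = drop i (path_arcs p)"
  by (simp add: path_arcs_def drop_zip tl_drop)

lemma map_fst_path_arcs: "map fst (path_arcs p) = butlast p"
  by (simp add: path_arcs_def map_fst_zip_take butlast_conv_take)

lemma map_snd_path_arcs: "map snd (path_arcs p) = tl p"
  by (simp add: path_arcs_def map_snd_zip_take)

lemma rtrancl_imp_dipath:
  assumes "(x, y) \<in> A\<^sup>*"
  shows "\<exists>p. path_from_to A p x y"
  using assms
proof (induction rule: converse_rtrancl_induct)
  case base
  show ?case by (rule exI[of _ "[y]"]) (simp add: path_from_to_def dipath_def path_arcs_def)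
next
  case (step x z)
  then obtain p where p: "dipath A p" "hd p = z" "last p = y"
    by (auto simp: path_from_to_def)
  show ?case
  proof (cases "x \<in> set p")
    case True
    \<comment> \<open>start at the occurrence of \<open>x\<close> on \<open>p\<close>, so that the path stays simple\<close>
    then obtain i where i: "i < length p" "p ! i = x" by (auto simp: in_set_conv_nth)
    have "set (path_arcs (drop i p)) \<subseteq> set (path_arcs p)"
      by (simp add: path_arcs_drop set_drop_subset)
    then have "dipath A (drop i p)"
      using p(1) i(1) by (auto simp: dipath_def)
    then have "path_from_to A (drop i p) x y"
      using i p(3) by (simp add: path_from_to_def hd_drop_conv_nth)
    then show ?thesis ..
  next
    case False
    have "dipath A (x # p)"
      using p step(1) False by (auto simp: dipath_def path_arcs_Cons)
    then have "path_from_to A (x # p) x y"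
      using p by (auto simp: path_from_to_def dipath_def)
    then show ?thesis ..
  qed
qed

lemma shortest_path_exists:
  assumes "(x, y) \<in> A\<^sup>*"
  shows "\<exists>p. path_from_to A p x y \<and> path_len p = dist A x y"
proof -
  from rtrancl_imp_dipath[OF assms] have "\<exists>n p. path_from_to A p x y \<and> path_len p = n"
    by blast
  then show ?thesis
    unfolding dist_def by (rule LeastI_ex[of "\<lambda>n. \<exists>p. path_from_to A p x y \<and> path_len p = n"])
qed

lemma strongly_connected_arcs:
  assumes "strongly_connected V A"
  shows "A \<subseteq> V \<times> V" and "(x, x) \<notin> A"
  using assms by (simp_all add: strongly_connected_def digraph_def)

lemma strongly_connected_reach:
  "strongly_connected V A \<Longrightarrow> x \<in> V \<Longrightarrow> y \<in> V \<Longrightarrow> (x, y) \<in> A\<^sup>*"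
  unfolding strongly_connected_def by blast

lemma strongly_rainbow_connected_imp_rainbow_connected:
  "strongly_rainbow_connected V A \<Gamma> \<Longrightarrow> rainbow_connected V A \<Gamma>"
  unfolding strongly_rainbow_connected_def rainbow_connected_def by blast

definition tail_separating :: "('a \<times> 'a) set \<Rightarrow> ('a \<times> 'a \<Rightarrow> nat) \<Rightarrow> bool" where
  "tail_separating A \<Gamma> \<longleftrightarrow> (\<forall>e\<in>A. \<forall>e'\<in>A. fst e \<noteq> fst e' \<longrightarrow> \<Gamma> e \<noteq> \<Gamma> e')"

lemma dipath_rainbow_if_tail_separating:
  assumes "tail_separating A \<Gamma>" and "dipath A p"
  shows "rainbow \<Gamma> p"
proof -
  let ?l = "path_arcs p"
  have "distinct (map fst ?l)"
    using assms(2) by (simp add: map_fst_path_arcs dipath_def distinct_butlast)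
  then have "distinct ?l" and fst_inj: "inj_on fst (set ?l)"
    by (simp_all add: distinct_map)
  have "inj_on \<Gamma> (set ?l)"
  proof (rule inj_onI)
    fix e e' assume "e \<in> set ?l" "e' \<in> set ?l" "\<Gamma> e = \<Gamma> e'"
    moreover have "set ?l \<subseteq> A"
      using assms(2) by (simp add: dipath_def)
    ultimately have "fst e = fst e'"
      using assms(1) unfolding tail_separating_def by blast
    then show "e = e'"
      using fst_inj \<open>e \<in> set ?l\<close> \<open>e' \<in> set ?l\<close> by (simp add: inj_on_eq_iff)
  qed
  with \<open>distinct ?l\<close> show ?thesis by (simp add: rainbow_def distinct_map)
qed

lemma strongly_rainbow_connected_if_tail_separating:
  assumes "strongly_connected V A" and "tail_separating A \<Gamma>"
  shows "strongly_rainbow_connected V A \<Gamma>"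
  unfolding strongly_rainbow_connected_def
proof (intro ballI impI)
  fix x y assume "x \<in> V" "y \<in> V"
  with assms(1) have "(x, y) \<in> A\<^sup>*"
    by (rule strongly_connected_reach)
  from shortest_path_exists[OF this]
  obtain p where p: "path_from_to A p x y" "path_len p = dist A x y"
    by blast
  moreover have "rainbow \<Gamma> p"
    using p(1) dipath_rainbow_if_tail_separating[OF assms(2)] by (simp add: path_from_to_def)
  ultimately show "\<exists>p. path_from_to A p x y \<and> path_len p = dist A x y \<and> rainbow \<Gamma> p"
    by blast
qed

lemma inj_arc_colouring_exists:
  assumes "finite A"
  shows "\<exists>\<Gamma>. arc_colouring A (card A) \<Gamma> \<and> inj_on \<Gamma> A"
proof -
  obtain h where h: "bij_betw h A {0..<card A}"
    using ex_bij_betw_finite_nat[OF assms] by blast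
  have "arc_colouring A (card A) (Suc \<circ> h)"
    using bij_betwE[OF h] by (auto simp: arc_colouring_def Suc_le_eq)
  moreover have "inj_on (Suc \<circ> h) A"
    using bij_betw_imp_inj_on[OF h] by (simp add: inj_on_def)
  ultimately show ?thesis by blast
qed

lemma tail_separating_colouring_with_repeated_out_colour:
  assumes "finite A" and "(v, a) \<in> A" and "(v, b) \<in> A" and "a \<noteq> b"
  shows "\<exists>\<Gamma>. arc_colouring A (card A - 1) \<Gamma> \<and> tail_separating A \<Gamma>"
proof -
  let ?B = "A - {(v, b)}"
  obtain h where h: "arc_colouring ?B (card ?B) h" "inj_on h ?B"
    using inj_arc_colouring_exists[of ?B] assms(1) by blast
  define g where "g e = (if e = (v, b) then (v, a) else e)" for e
  have gB: "g ` A \<subseteq> ?B" and fst_g: "fst (g e) = fst e" for e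
    using assms(2,4) by (auto simp: g_def)
  have "arc_colouring A (card A - 1) (h \<circ> g)"
    using h(1) gB assms(1,3) by (auto simp: arc_colouring_def)
  moreover have "tail_separating A (h \<circ> g)"
    unfolding tail_separating_def
  proof (intro ballI impI)
    fix e e' assume "e \<in> A" "e' \<in> A" "fst e \<noteq> fst e'"
    then have "g e \<noteq> g e'"
      by (metis fst_g)
    moreover have "g e \<in> ?B" "g e' \<in> ?B"
      using gB \<open>e \<in> A\<close> \<open>e' \<in> A\<close> by blast+
    ultimately show "(h \<circ> g) e \<noteq> (h \<circ> g) e'"
      using h(2) by (auto dest: inj_onD)
  qed
  ultimately show ?thesis by blast
qed

lemma rc_le:
  assumes "arc_colouring A k \<Gamma>" and "rainbow_connected V A \<Gamma>"
  shows "rc V A \<le> k"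
  unfolding rc_def using assms by (intro Least_le) blast

lemma rc_le_card_arcs_minus_one:
  assumes "strongly_connected V A" and "finite A"
    and "(v, a) \<in> A" and "(v, b) \<in> A" and "a \<noteq> b"
  shows "rc V A \<le> card A - 1"
proof -
  obtain \<Gamma> where "arc_colouring A (card A - 1) \<Gamma>" and "tail_separating A \<Gamma>"
    using tail_separating_colouring_with_repeated_out_colour[OF assms(2-5)] by blast
  then show ?thesis
    by (intro rc_le strongly_rainbow_connected_imp_rainbow_connected
        strongly_rainbow_connected_if_tail_separating[OF assms(1)])
qed

text \<open>
  A digraph in which every vertex has exactly one out-arc is the graph \<open>(\<lambda>v. (v, s v)) ` V\<close> of
  its successor map \<open>s\<close>, and it is the directed cycle iff \<open>V\<close> is a single orbit of \<open>s\<close>,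
  i.e. \<open>cyclic_on s V\<close>.
\<close>

lemma rtrancl_graph_imp_funpow:
  assumes "(x, y) \<in> ((\<lambda>v. (v, s v)) ` V)\<^sup>*"
  shows "\<exists>n. y = (s ^^ n) x"
  using assms
proof (induction rule: rtrancl_induct)
  case base
  show ?case by (rule exI[of _ 0]) simp
next
  case (step y z)
  then obtain n where "y = (s ^^ n) x" by blast
  moreover have "z = s y" using step(2) by blast
  ultimately have "z = (s ^^ Suc n) x" by simp
  then show ?case ..
qed

lemma card_graph: "card ((\<lambda>v. (v, s v)) ` V) = card V"
  by (rule card_image) (simp add: inj_on_def)

lemma path_arcs_in_graph:
  assumes "set (path_arcs p) \<subseteq> (\<lambda>v. (v, s v)) ` V"
  shows "path_arcs p = map (\<lambda>v. (v, s v)) (butlast p)"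
proof -
  have "path_arcs p = map (\<lambda>e. (fst e, s (fst e))) (path_arcs p)"
    using assms by (intro map_idI[symmetric]) auto
  also have "\<dots> = map (\<lambda>v. (v, s v)) (butlast p)"
    by (simp flip: map_fst_path_arcs)
  finally show ?thesis .
qed

lemma cyclic_on_Suc_mod: "0 < m \<Longrightarrow> cyclic_on (\<lambda>i. Suc i mod m) {..<m}"
proof (rule cyclic_on_singleI)
  assume "0 < m"
  have pow: "((\<lambda>i. Suc i mod m) ^^ n) 0 = n mod m" for n
    by (induction n) (simp_all add: mod_Suc_eq)
  have "{..<m} \<subseteq> {n mod m | n. 0 < n}"
  proof
    fix i assume "i \<in> {..<m}"
    then have "i = (i + m) mod m" "0 < i + m" using \<open>0 < m\<close> by simp_all
    then show "i \<in> {n mod m | n. 0 < n}" by blast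
  qed
  then show "{..<m} = orbit (\<lambda>i. Suc i mod m) 0"
    using \<open>0 < m\<close> by (auto simp: orbit_altdef pow)
  show "0 \<in> {..<m}" using \<open>0 < m\<close> by simp
qed

lemma directed_cycle_imp_successor:
  assumes "is_directed_cycle V A m" and "0 < m"
  shows "\<exists>s. A = (\<lambda>v. (v, s v)) ` V \<and> cyclic_on s V"
proof -
  obtain f where f: "bij_betw f {..<m} V" and A: "A = {(f i, f (Suc i mod m)) | i. i < m}"
    using assms(1) unfolding is_directed_cycle_def by blast
  define s where "s v = f (Suc (inv_into {..<m} f v) mod m)" for v
  have s_f: "s (f i) = f (Suc i mod m)" if "i < m" for i
    using that bij_betw_imp_inj_on[OF f] by (simp add: s_def)
  have V: "V = f ` {..<m}"
    using f by (simp add: bij_betw_def)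
  have "A = (\<lambda>v. (v, s v)) ` V"
    unfolding A V using s_f by auto
  moreover have "cyclic_on s V"
    unfolding V using cyclic_on_Suc_mod[OF assms(2)] s_f
    by (rule cyclic_on_image) simp
  ultimately show ?thesis by blast
qed

lemma successor_imp_directed_cycle:
  assumes A: "A = (\<lambda>v. (v, s v)) ` V" and cyc: "cyclic_on s V"
  shows "is_directed_cycle V A (card V)"
proof -
  obtain v where "v \<in> V" and V: "V = orbit s v"
    using cyc unfolding cyclic_on_def by blast
  then have v_orbit: "v \<in> orbit s v" by simp
  define n where "n = funpow_dist1 s v v"
  define f where "f = (\<lambda>i. (s ^^ i) v)"
  have V_f: "V = f ` {..<n}"
    using orbit_conv_funpow_dist1[OF v_orbit] by (simp add: V f_def n_def atLeast0LessThan)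
  moreover have "inj_on f {..<n}"
    using inj_on_funpow_dist1[OF v_orbit] by (simp add: f_def n_def atLeast0LessThan)
  ultimately have bij: "bij_betw f {..<n} V" and "card V = n"
    by (simp_all add: bij_betw_def card_image)
  have "(s ^^ n) v = v"
    using funpow_dist1_prop[OF v_orbit] by (simp add: n_def)
  then have s_f: "s (f i) = f (Suc i mod n)" for i
    by (simp add: f_def funpow_mod_eq)
  have "A = {(f i, f (Suc i mod n)) | i. i < n}"
    unfolding A V_f by (auto simp: s_f)
  with bij \<open>card V = n\<close> show ?thesis
    unfolding is_directed_cycle_def by blast
qed

lemma strongly_connected_out_arc:
  assumes sc: "strongly_connected V A" and "A \<noteq> {}" and "v \<in> V"
  shows "\<exists>w. (v, w) \<in> A"
proof -
  obtain a b where "(a, b) \<in> A" using \<open>A \<noteq> {}\<close> by auto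
  then have "a \<in> V" "b \<in> V" "a \<noteq> b"
    using strongly_connected_arcs[OF sc] by blast+
  then obtain u where "u \<in> V" "u \<noteq> v" by blast
  with sc \<open>v \<in> V\<close> have "(v, u) \<in> A\<^sup>*"
    by (intro strongly_connected_reach)
  with \<open>u \<noteq> v\<close> show ?thesis
    by (metis converse_rtranclE)
qed

lemma functional_arcs_eq_graph:
  assumes AV: "A \<subseteq> V \<times> V" and out: "\<And>v. v \<in> V \<Longrightarrow> \<exists>w. (v, w) \<in> A"
    and out_unique: "\<And>v a b. (v, a) \<in> A \<Longrightarrow> (v, b) \<in> A \<Longrightarrow> a = b"
  shows "\<exists>s. A = (\<lambda>v. (v, s v)) ` V"
proof -
  define s where "s v = (THE w. (v, w) \<in> A)" for v
  have arc_s: "(v, s v) \<in> A" if v: "v \<in> V" for v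
  proof -
    obtain w where "(v, w) \<in> A"
      using out[OF v] by blast
    then show ?thesis
      unfolding s_def by (rule theI) (use \<open>(v, w) \<in> A\<close> out_unique in blast)
  qed
  have "A = (\<lambda>v. (v, s v)) ` V"
  proof
    show "A \<subseteq> (\<lambda>v. (v, s v)) ` V"
    proof clarify
      fix x y assume "(x, y) \<in> A"
      moreover from this have "x \<in> V" using AV by blast
      ultimately have "y = s x" using out_unique arc_s by blast
      with \<open>x \<in> V\<close> show "(x, y) \<in> (\<lambda>v. (v, s v)) ` V" by blast
    qed
    show "(\<lambda>v. (v, s v)) ` V \<subseteq> A"
      using arc_s by blast
  qed
  then show ?thesis by blast
qed

lemma strongly_connected_graph_cyclic_on:
  assumes sc: "strongly_connected V ((\<lambda>v. (v, s v)) ` V)"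
  shows "cyclic_on s V"
proof -
  obtain v where "v \<in> V"
    using sc by (auto simp: strongly_connected_def)
  have s_V: "s x \<in> V" if "x \<in> V" for x
    using strongly_connected_arcs(1)[OF sc] that by blast
  have "V = orbit s v"
  proof
    show "orbit s v \<subseteq> V"
    proof
      fix y assume "y \<in> orbit s v"
      then show "y \<in> V"
        by induction (use s_V \<open>v \<in> V\<close> in auto)
    qed
    show "V \<subseteq> orbit s v"
    proof
      fix y assume "y \<in> V"
      with sc s_V[OF \<open>v \<in> V\<close>] have "(s v, y) \<in> ((\<lambda>v. (v, s v)) ` V)\<^sup>*"
        by (intro strongly_connected_reach)
      then obtain n where "y = (s ^^ n) (s v)"
        using rtrancl_graph_imp_funpow by metis
      then have "y = (s ^^ Suc n) v"
        by (simp add: funpow_swap1)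
      then show "y \<in> orbit s v"
        unfolding orbit_altdef using zero_less_Suc by blast
    qed
  qed
  with \<open>v \<in> V\<close> show ?thesis
    by (rule cyclic_on_singleI)
qed

lemma out_degree_one_imp_successor:
  assumes sc: "strongly_connected V A" and "A \<noteq> {}"
    and out_unique: "\<And>v a b. (v, a) \<in> A \<Longrightarrow> (v, b) \<in> A \<Longrightarrow> a = b"
  shows "\<exists>s. A = (\<lambda>v. (v, s v)) ` V \<and> cyclic_on s V"
proof -
  obtain s where A: "A = (\<lambda>v. (v, s v)) ` V"
    using functional_arcs_eq_graph strongly_connected_arcs(1)[OF sc]
      strongly_connected_out_arc[OF sc \<open>A \<noteq> {}\<close>] out_unique by metis
  moreover have "cyclic_on s V"
    using sc unfolding A by (rule strongly_connected_graph_cyclic_on)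
  ultimately show ?thesis by blast
qed

lemma cycle_path_back_arcs:
  assumes A: "A = (\<lambda>v. (v, s v)) ` V" and cyc: "cyclic_on s V" and "u \<in> V"
    and p: "path_from_to A p (s u) u"
  shows "set (path_arcs p) = A - {(u, s u)}"
proof -
  have dp: "dipath A p" and hd: "hd p = s u" and "last p = u"
    using p by (simp_all add: path_from_to_def)
  then have "p \<noteq> []" by (simp add: dipath_def)
  with \<open>last p = u\<close> obtain q where p_q: "p = q @ [u]"
    by (metis append_butlast_last_id)
  then have u_notin: "u \<notin> set q"
    using dp by (simp add: dipath_def)
  have arcs: "path_arcs p = map (\<lambda>v. (v, s v)) q"
    using dp A path_arcs_in_graph[of p s V] by (simp add: dipath_def p_q)
  have q_V: "set q \<subseteq> V"
    using dp A by (auto simp: dipath_def arcs)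
  \<comment> \<open>the last vertex \<open>u\<close> is followed by \<open>s u = hd p\<close>, so \<open>set p\<close> is closed under \<open>s\<close>\<close>
  have closed: "s x \<in> set p" if "x \<in> set p" for x
  proof (cases "x = u")
    case True
    then show ?thesis using hd \<open>p \<noteq> []\<close> by (metis hd_in_set)
  next
    case False
    then have "x \<in> set q"
      using that by (simp add: p_q)
    then have "(x, s x) \<in> set (path_arcs p)"
      by (simp add: arcs)
    then have "s x \<in> set (tl p)"
      by (metis map_snd_path_arcs image_eqI set_map snd_conv)
    then show ?thesis
      using \<open>p \<noteq> []\<close> by (rule list.set_sel(2)[rotated])
  qed
  have "orbit s (s u) \<subseteq> set p"
  proof
    fix y assume "y \<in> orbit s (s u)"
    then show "y \<in> set p"
    proof induction
      case base
      then show ?case using closed hd \<open>p \<noteq> []\<close> hd_in_set by metis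
    next
      case (step y)
      then show ?case using closed by blast
    qed
  qed
  moreover have "V = orbit s (s u)"
    using cyc cyclic_on_inI[OF cyc \<open>u \<in> V\<close>] by (simp add: cyclic_on_alldef)
  ultimately have "set q = V - {u}"
    using q_V u_notin by (auto simp: p_q)
  then show ?thesis
    unfolding arcs A by auto
qed

lemma cycle_rainbow_colouring_inj:
  assumes A: "A = (\<lambda>v. (v, s v)) ` V" and cyc: "cyclic_on s V" and "3 \<le> card A"
    and rc: "rainbow_connected V A \<Gamma>"
  shows "inj_on \<Gamma> A"
proof (rule inj_onI, rule ccontr)
  fix e1 e2 assume e12: "e1 \<in> A" "e2 \<in> A" "\<Gamma> e1 = \<Gamma> e2" "e1 \<noteq> e2"
  have "\<not> A \<subseteq> {e1, e2}"
  proof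
    assume "A \<subseteq> {e1, e2}"
    then have "card A \<le> 2"
      by (metis card_2_iff card_mono e12(4) finite.emptyI finite.insertI)
    with \<open>3 \<le> card A\<close> show False by simp
  qed
  then obtain e where "e \<in> A" "e \<noteq> e1" "e \<noteq> e2"
    by blast
  then obtain u where "u \<in> V" and e: "e = (u, s u)" using A by blast
  have "s u \<noteq> u"
  proof
    assume "s u = u"
    have "V = orbit s u"
      using cyc \<open>u \<in> V\<close> by (simp add: cyclic_on_alldef)
    also have "\<dots> = {u}"
      using \<open>s u = u\<close> by (simp add: orbit_eq_singleton_iff)
    finally show False
      using \<open>3 \<le> card A\<close> by (simp add: A)
  qed
  moreover have "s u \<in> V" using cyclic_on_inI[OF cyc \<open>u \<in> V\<close>] .
  ultimately obtain p where p: "path_from_to A p (s u) u" "rainbow \<Gamma> p"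
    using rc \<open>u \<in> V\<close> unfolding rainbow_connected_def by blast
  then have "set (path_arcs p) = A - {e}"
    using cycle_path_back_arcs[OF A cyc \<open>u \<in> V\<close>] e by blast
  moreover have "inj_on \<Gamma> (set (path_arcs p))"
    using p(2) by (simp add: rainbow_def distinct_map)
  ultimately show False
    using e12 \<open>e \<noteq> e1\<close> \<open>e \<noteq> e2\<close> by (auto dest: inj_onD)
qed

lemma arc_colouring_inj_card_le:
  assumes "arc_colouring A k \<Gamma>" and "inj_on \<Gamma> A"
  shows "card A \<le> k"
proof -
  have "card A \<le> card {1..k}"
    using assms by (intro card_inj_on_le) (auto simp: arc_colouring_def)
  then show ?thesis by simp
qed

lemma rc_src_eq_card_arcs:
  assumes sc: "strongly_connected V A" and "finite A"
    and lower: "\<And>k \<Gamma>. arc_colouring A k \<Gamma> \<Longrightarrow> rainbow_connected V A \<Gamma> \<Longrightarrow> card A \<le> k"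
  shows "rc V A = card A" and "src V A = card A"
proof -
  obtain \<Gamma> where col: "arc_colouring A (card A) \<Gamma>" and "inj_on \<Gamma> A"
    using inj_arc_colouring_exists[OF \<open>finite A\<close>] by blast
  then have "tail_separating A \<Gamma>"
    unfolding tail_separating_def by (auto dest: inj_onD)
  with sc have srcon: "strongly_rainbow_connected V A \<Gamma>"
    by (rule strongly_rainbow_connected_if_tail_separating)
  show "rc V A = card A"
    unfolding rc_def
  proof (rule Least_equality)
    show "\<exists>\<Gamma>. arc_colouring A (card A) \<Gamma> \<and> rainbow_connected V A \<Gamma>"
      using col srcon strongly_rainbow_connected_imp_rainbow_connected by blast
  qed (use lower in blast)
  show "src V A = card A"
    unfolding src_def
  proof (rule Least_equality)
    show "\<exists>\<Gamma>. arc_colouring A (card A) \<Gamma> \<and> strongly_rainbow_connected V A \<Gamma>"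
      using col srcon by blast
  qed (use lower strongly_rainbow_connected_imp_rainbow_connected in blast)
qed

theorem corollary5:
  fixes V :: "'a set" and A :: "('a \<times> 'a) set" and m :: nat
  assumes "strongly_connected V A"
    and "card A = m"
    and "m \<ge> 3"
  shows "(rc V A = m \<and> src V A = m) \<longleftrightarrow> is_directed_cycle V A m"
proof -
  have "finite A" and "A \<noteq> {}"
    using assms(2,3) card_gt_0_iff[of A] by simp_all
  show ?thesis
  proof
    assume "rc V A = m \<and> src V A = m"
    then have "a = b" if "(v, a) \<in> A" "(v, b) \<in> A" for v a b
      using rc_le_card_arcs_minus_one[OF assms(1) \<open>finite A\<close> that] assms(2,3) by force
    with assms(1) \<open>A \<noteq> {}\<close> have "\<exists>s. A = (\<lambda>v. (v, s v)) ` V \<and> cyclic_on s V"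
      by (rule out_degree_one_imp_successor)
    then obtain s where A: "A = (\<lambda>v. (v, s v)) ` V" and cyc: "cyclic_on s V"
      by blast
    with assms(2) successor_imp_directed_cycle[OF A cyc] show "is_directed_cycle V A m"
      by (simp add: card_graph)
  next
    assume "is_directed_cycle V A m"
    with assms(3) obtain s where A: "A = (\<lambda>v. (v, s v)) ` V" and cyc: "cyclic_on s V"
      using directed_cycle_imp_successor by fastforce
    have "card A \<le> k" if "arc_colouring A k \<Gamma>" "rainbow_connected V A \<Gamma>" for k \<Gamma>
      using that(1) cycle_rainbow_colouring_inj[OF A cyc _ that(2)] assms(2,3)
      by (intro arc_colouring_inj_card_le) simp_all
    with rc_src_eq_card_arcs[OF assms(1) \<open>finite A\<close>] assms(2)
    show "rc V A = m \<and> src V A = m"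
      by blast
  qed
qed

end
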